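(* Let $\mathbf m^*=(\mathbf x^*,\mathbf p^* )$ be an efficient stationary profile of the mechanism (with constants $\kappa^*>0$, $\gamma>0$, $w^*_{j,l}$). Then every agent weakly prefers its outcome to the initial allocation $(\mathbf 0,0)$: for every $i\in\mathcal A$, $U_i(\mathbf x_i^* )-t_i(\mathbf m^* )\ge U_i(\mathbf 0)-0=0$.
   Context: Agents $\mathcal A=\{1,\dots,m\}$; finite set of divisible goods $\mathcal L$ with capacities $c_l\ge 0$. Each agent $i$ has a fixed subset $\mathcal L_i\subseteq\mathcal L$ of goods it may request; $\mathcal A_l=\{i:l\in\mathcal L_i\}$, assumed to satisfy $|\mathcal A_l|\ge 3$. Each utility $U_i:\mathbb R^{|\mathcal L_i|}\to\mathbb R$ is differentiable and concave with $U_i(\mathbf 0)=0$. A message of agent $i$ is $\mathbf m_i=(\mathbf x_i,\mathbf p_i)$ with $0\le x_{i,l}\le c_l$ and $0\le p_{i,l}\le M$, $l\in\mathcal L_i$, for a fixed $0<M<\infty$. For a good $l$ write $N=|\mathcal A_l|$, $\bar p_l=\frac1N\sum_{j\in\mathcal A_l}p_{j,l}$, $p_{-i,l}=\frac1{N-1}\sum_{j\in\mathcal A_l,j\ne i}p_{j,l}$, $w_{-i,l}=\frac1{N-1}\sum_{j\in\mathcal A_l,j\ne i}w_{j,l}$, $\mathcal E_{-i,l}=\sum_{j\in\mathcal A_l,j\neq i}x_{j,l}-c_l$. Tax of agent $i$ for good $l$ (given $\kappa>0$, $\gamma>0$, numbers $w_{j,l}\ge0$): $t_{i,l}=w_{-i,l}x_{i,l}+\frac1\kappa|p_{i,l}-\bar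 p_l|^2-w_{-i,l}(p_{i,l}-p_{-i,l})\frac{x_{i,l}+\mathcal E_{-i,l}}{\gamma}+\phi_{i,l}$, with $\bar p_l$ computed including agent $i$'s own $p_{i,l}$ and $\phi_{i,l}$ depending only on the messages of agents other than $i$; at the profile $\mathbf m^*$ considered, $\phi_{i,l}=-w^*_l\,\frac{1}{N-1}\sum_{j\in\mathcal A_l,j\ne i}x^*_{j,l}$. Total tax $t_i=\sum_{l\in\mathcal L_i}t_{i,l}$. A profile $\mathbf m^*$ is a stationary profile if for every $i$ and every admissible $\mathbf m_i$: $U_i(\mathbf x_i^* )-t_i(\mathbf m_i^*,\mathbf m_{-i}^* )\ge U_i(\mathbf x_i)-t_i(\mathbf m_i,\mathbf m_{-i}^* )$. It is an efficient stationary profile if moreover $w^*_{i,l}=w^*_{j,l}=w^*_{-i,l}=:w^*_l$ for all $l\in\mathcal L$, $i,j\in\mathcal A_l$. *)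

theory Defs
  imports "HOL-Analysis.Analysis"
begin

text \<open>Lset i is the set of goods agent i may request.
  Allocations/prices of agent i are vectors in real^'l; only the coordinates in Lset i matter.\<close>

definition agents_of :: "('a::finite \<Rightarrow> 'l set) \<Rightarrow> 'l \<Rightarrow> 'a set" where
  "agents_of Lset l = {i. l \<in> Lset i}"

definition pbar :: "('a::finite \<Rightarrow> 'l set) \<Rightarrow> ('a \<Rightarrow> real ^ 'l::finite) \<Rightarrow> 'l \<Rightarrow> real" where
  "pbar Lset p l = (\<Sum>j\<in>agents_of Lset l. p j $ l) / real (card (agents_of Lset l))"

definition avg_others :: "('a::finite \<Rightarrow> 'l set) \<Rightarrow> ('a \<Rightarrow> real ^ 'l::finite) \<Rightarrow> 'a \<Rightarrow> 'l \<Rightarrow> real" where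
  "avg_others Lset v i l =
     (\<Sum>j\<in>agents_of Lset l - {i}. v j $ l) / (real (card (agents_of Lset l)) - 1)"

definition excess_others :: "('a::finite \<Rightarrow> 'l set) \<Rightarrow> (real ^ 'l::finite) \<Rightarrow> ('a \<Rightarrow> real ^ 'l) \<Rightarrow> 'a \<Rightarrow> 'l \<Rightarrow> real" where
  "excess_others Lset c x i l = (\<Sum>j\<in>agents_of Lset l - {i}. x j $ l) - c $ l"

text \<open>Tax of agent i for good l; phi i l is the term depending only on the others' messages.\<close>
definition tax_good ::
  "('a::finite \<Rightarrow> 'l set) \<Rightarrow> (real ^ 'l::finite) \<Rightarrow> real \<Rightarrow> real \<Rightarrow> ('a \<Rightarrow> real ^ 'l)
   \<Rightarrow> ('a \<Rightarrow> 'l \<Rightarrow> real) \<Rightarrow> ('a \<Rightarrow> real ^ 'l) \<Rightarrow> ('a \<Rightarrow> real ^ 'l) \<Rightarrow> 'a \<Rightarrow> 'l \<Rightarrow> real" where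
  "tax_good Lset c kappa gamma w phi x p i l =
     avg_others Lset w i l * x i $ l
     + (1 / kappa) * \<bar>p i $ l - pbar Lset p l\<bar>\<^sup>2
     - avg_others Lset w i l * (p i $ l - avg_others Lset p i l)
         * (x i $ l + excess_others Lset c x i l) / gamma
     + phi i l"

definition tax ::
  "('a::finite \<Rightarrow> 'l set) \<Rightarrow> (real ^ 'l::finite) \<Rightarrow> real \<Rightarrow> real \<Rightarrow> ('a \<Rightarrow> real ^ 'l)
   \<Rightarrow> ('a \<Rightarrow> 'l \<Rightarrow> real) \<Rightarrow> ('a \<Rightarrow> real ^ 'l) \<Rightarrow> ('a \<Rightarrow> real ^ 'l) \<Rightarrow> 'a \<Rightarrow> real" where
  "tax Lset c kappa gamma w phi x p i = (\<Sum>l\<in>Lset i. tax_good Lset c kappa gamma w phi x p i l)"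

definition admissible ::
  "('a::finite \<Rightarrow> 'l set) \<Rightarrow> (real ^ 'l::finite) \<Rightarrow> real \<Rightarrow> 'a \<Rightarrow> real ^ 'l \<Rightarrow> real ^ 'l \<Rightarrow> bool" where
  "admissible Lset c M i xi qi \<longleftrightarrow>
     (\<forall>l\<in>Lset i. 0 \<le> xi $ l \<and> xi $ l \<le> c $ l \<and> 0 \<le> qi $ l \<and> qi $ l \<le> M)"

text \<open>Stationary profile (x*, p*): no agent gains by unilaterally changing its message,
  the phi-terms being fixed (they depend only on the others' messages).\<close>
definition stationary ::
  "('a::finite \<Rightarrow> 'l set) \<Rightarrow> (real ^ 'l::finite) \<Rightarrow> real \<Rightarrow> real \<Rightarrow> real \<Rightarrow> ('a \<Rightarrow> real ^ 'l \<Rightarrow> real)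
   \<Rightarrow> ('a \<Rightarrow> real ^ 'l) \<Rightarrow> ('a \<Rightarrow> 'l \<Rightarrow> real) \<Rightarrow> ('a \<Rightarrow> real ^ 'l) \<Rightarrow> ('a \<Rightarrow> real ^ 'l) \<Rightarrow> bool" where
  "stationary Lset c M kappa gamma U w phi x p \<longleftrightarrow>
     (\<forall>i. \<forall>xi qi. admissible Lset c M i xi qi \<longrightarrow>
        U i (x i) - tax Lset c kappa gamma w phi x p i
        \<ge> U i xi - tax Lset c kappa gamma w phi (x(i := xi)) (p(i := qi)) i)"

end

theory Submission
  imports Defs
begin

(* The idea is the opt-out deviation: agent i may announce the message
   (0, q) where q_l = p*_{-i,l} is the average price announced by the others.
   Then the overall average price is q_l again, so the price-deviation penalty
   and the price-coupling term both vanish, and the term w_{-i,l} x_{i,l}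
   vanishes because x_{i,l} = 0; what remains of the tax is phi_{i,l} alone.
   For efficient profiles phi_{i,l} = - w*_l x*_{-i,l} <= 0, since the common
   weight w*_l is nonnegative and the others' requests are nonnegative.
   Stationarity compares the equilibrium payoff with this deviation. *)

lemma avg_others_update_self:
  "avg_others Lset (v(i := z)) i l = avg_others Lset v i l"
  unfolding avg_others_def by (intro arg_cong2[where f="(/)"] sum.cong) auto

lemma avg_others_bounds:
  fixes Lset :: "'a::finite \<Rightarrow> 'l::finite set"
  assumes i_req: "l \<in> Lset i" and two: "card (agents_of Lset l) \<ge> 2"
    and bounds: "\<forall>j\<in>agents_of Lset l - {i}. lo \<le> v j $ l \<and> v j $ l \<le> hi"
  shows "lo \<le> avg_others Lset v i l \<and> avg_others Lset v i l \<le> hi"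
proof -
  let ?O = "agents_of Lset l - {i}"
  have "i \<in> agents_of Lset l" using i_req by (simp add: agents_of_def)
  then have denom: "real (card (agents_of Lset l)) - 1 = real (card ?O)"
    using two by (simp add: of_nat_diff)
  have pos: "real (card ?O) > 0" using denom two by simp
  have "(\<Sum>j\<in>?O. lo) \<le> (\<Sum>j\<in>?O. v j $ l)" using bounds by (intro sum_mono) auto
  moreover have "(\<Sum>j\<in>?O. v j $ l) \<le> (\<Sum>j\<in>?O. hi)" using bounds by (intro sum_mono) auto
  ultimately show ?thesis unfolding avg_others_def denom using pos by (simp add: field_simps)
qed

lemma pbar_at_avg_others:
  fixes Lset :: "'a::finite \<Rightarrow> 'l::finite set"
  assumes i_req: "l \<in> Lset i" and two: "card (agents_of Lset l) \<ge> 2"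
    and q: "q $ l = avg_others Lset p i l"
  shows "pbar Lset (p(i := q)) l = avg_others Lset p i l"
proof -
  let ?A = "agents_of Lset l"
  define S where "S = (\<Sum>j\<in>?A - {i}. p j $ l)"
  define n where "n = real (card ?A)"
  have "i \<in> ?A" using i_req by (simp add: agents_of_def)
  then have "(\<Sum>j\<in>?A. (p(i := q)) j $ l) = q $ l + (\<Sum>j\<in>?A - {i}. (p(i := q)) j $ l)"
    by (simp add: sum.remove)
  also have "(\<Sum>j\<in>?A - {i}. (p(i := q)) j $ l) = S"
    unfolding S_def by (intro sum.cong) auto
  finally have total: "(\<Sum>j\<in>?A. (p(i := q)) j $ l) = q $ l + S" .
  have avg: "avg_others Lset p i l = S / (n - 1)"
    unfolding avg_others_def S_def n_def by simp
  have "n \<ge> 2" using two by (simp add: n_def)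
  then have "(S / (n - 1) + S) / n = S / (n - 1)" by (simp add: field_simps)
  then show ?thesis unfolding pbar_def total q avg n_def[symmetric] by simp
qed

definition optout_price :: "('a::finite \<Rightarrow> 'l set) \<Rightarrow> ('a \<Rightarrow> real ^ 'l::finite) \<Rightarrow> 'a \<Rightarrow> real ^ 'l" where
  "optout_price Lset p i = (\<chi> l. avg_others Lset p i l)"

lemma optout_admissible:
  fixes Lset :: "'a::finite \<Rightarrow> 'l::finite set"
  assumes c_nonneg: "\<forall>l. 0 \<le> c $ l"
    and two: "\<forall>l. card (agents_of Lset l) \<ge> 2"
    and adm: "\<forall>j. admissible Lset c M j (x j) (p j)"
  shows "admissible Lset c M i 0 (optout_price Lset p i)"
  unfolding admissible_def optout_price_def
proof (intro ballI)
  fix l assume l: "l \<in> Lset i"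
  have "\<forall>j\<in>agents_of Lset l - {i}. 0 \<le> p j $ l \<and> p j $ l \<le> M"
    using adm by (auto simp: admissible_def agents_of_def)
  then have "0 \<le> avg_others Lset p i l \<and> avg_others Lset p i l \<le> M"
    using avg_others_bounds[where Lset=Lset and i=i and v=p, OF l] two by blast
  then show "0 \<le> (0::real^'l) $ l \<and> (0::real^'l) $ l \<le> c $ l
      \<and> 0 \<le> (\<chi> l. avg_others Lset p i l) $ l \<and> (\<chi> l. avg_others Lset p i l) $ l \<le> M"
    using c_nonneg by simp
qed

lemma tax_good_optout:
  fixes Lset :: "'a::finite \<Rightarrow> 'l::finite set"
  assumes "l \<in> Lset i" and "card (agents_of Lset l) \<ge> 2"
  shows "tax_good Lset c kappa gamma w phi (x(i := 0)) (p(i := optout_price Lset p i)) i l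
         = phi i l"
proof -
  have "pbar Lset (p(i := optout_price Lset p i)) l = avg_others Lset p i l"
    using assms by (intro pbar_at_avg_others) (simp_all add: optout_price_def)
  then show ?thesis
    unfolding tax_good_def avg_others_update_self by (simp add: optout_price_def)
qed

lemma stationary_participation:
  fixes Lset :: "'a::finite \<Rightarrow> 'l::finite set"
  assumes c_nonneg: "\<forall>l. 0 \<le> c $ l"
    and two: "\<forall>l. card (agents_of Lset l) \<ge> 2"
    and adm: "\<forall>j. admissible Lset c M j (x j) (p j)"
    and stat: "stationary Lset c M kappa gamma U w phi x p"
  shows "U i (x i) - tax Lset c kappa gamma w phi x p i \<ge> U i 0 - (\<Sum>l\<in>Lset i. phi i l)"
proof -
  let ?q = "optout_price Lset p i"
  have "tax Lset c kappa gamma w phi (x(i := 0)) (p(i := ?q)) i = (\<Sum>l\<in>Lset i. phi i l)"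
    unfolding tax_def using two by (intro sum.cong) (simp_all add: tax_good_optout)
  moreover have "admissible Lset c M i 0 ?q"
    using optout_admissible[OF c_nonneg two adm] .
  ultimately show ?thesis using stat unfolding stationary_def by metis
qed

lemma efficient_phi_nonpos:
  fixes Lset :: "'a::finite \<Rightarrow> 'l::finite set"
  assumes "l \<in> Lset i" and "card (agents_of Lset l) \<ge> 2"
    and w_nonneg: "\<forall>j l. 0 \<le> w j $ l"
    and efficient: "\<forall>l. \<forall>j\<in>agents_of Lset l. w j $ l = wstar l"
    and adm: "\<forall>j. admissible Lset c M j (x j) (p j)"
  shows "- wstar l * avg_others Lset x i l \<le> 0"
proof -
  have i_in: "i \<in> agents_of Lset l" using assms(1) by (simp add: agents_of_def)
  have "0 \<le> wstar l" using efficient w_nonneg i_in by metis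
  moreover have "\<forall>j\<in>agents_of Lset l - {i}. 0 \<le> x j $ l \<and> x j $ l \<le> c $ l"
    using adm by (auto simp: admissible_def agents_of_def)
  then have "0 \<le> avg_others Lset x i l"
    using avg_others_bounds[where Lset=Lset and i=i and v=x, OF assms(1,2)] by blast
  ultimately show ?thesis by simp
qed

theorem theorem1:
  fixes Lset :: "'a::finite \<Rightarrow> 'l::finite set"
    and c :: "real ^ 'l"
    and M kappa gamma :: real
    and U :: "'a \<Rightarrow> real ^ 'l \<Rightarrow> real"
    and w :: "'a \<Rightarrow> real ^ 'l"
    and wstar :: "'l \<Rightarrow> real"
    and xs ps :: "'a \<Rightarrow> real ^ 'l"
  assumes c_nonneg: "\<forall>l. 0 \<le> c $ l"
    and M_pos: "0 < M"
    and agents_ge3: "\<forall>l. card (agents_of Lset l) \<ge> 3"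
    and U_local: "\<forall>i v v'. (\<forall>l\<in>Lset i. v $ l = v' $ l) \<longrightarrow> U i v = U i v'"
    and U_concave: "\<forall>i. concave_on UNIV (U i)"
    and U_diff: "\<forall>i v. U i differentiable (at v)"
    and U_zero: "\<forall>i. U i 0 = 0"
    and kappa_pos: "0 < kappa"
    and gamma_pos: "0 < gamma"
    and w_nonneg: "\<forall>j l. 0 \<le> w j $ l"
    and efficient: "\<forall>l. \<forall>j\<in>agents_of Lset l. w j $ l = wstar l"
    and adm: "\<forall>j. admissible Lset c M j (xs j) (ps j)"
    and stat: "stationary Lset c M kappa gamma U w
                 (\<lambda>i l. - wstar l * avg_others Lset xs i l) xs ps"
  shows "\<forall>i. U i (xs i) - tax Lset c kappa gamma w
                 (\<lambda>i l. - wstar l * avg_others Lset xs i l) xs ps i \<ge> U i 0 - 0"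
proof
  fix i
  have two: "\<forall>l. card (agents_of Lset l) \<ge> 2" using agents_ge3 by (auto intro: le_trans[of 2 3])
  have "(\<Sum>l\<in>Lset i. - wstar l * avg_others Lset xs i l) \<le> 0"
    using efficient_phi_nonpos[OF _ _ w_nonneg efficient adm] two by (intro sum_nonpos) blast
  moreover have "U i (xs i) - tax Lset c kappa gamma w (\<lambda>i l. - wstar l * avg_others Lset xs i l) xs ps i
      \<ge> U i 0 - (\<Sum>l\<in>Lset i. - wstar l * avg_others Lset xs i l)"
    using stationary_participation[OF c_nonneg two adm stat] by simp
  ultimately show "U i (xs i) - tax Lset c kappa gamma w
                 (\<lambda>i l. - wstar l * avg_others Lset xs i l) xs ps i \<ge> U i 0 - 0"
    by simp
qed

end
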